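(* Let $n\ge1$ and let $S\subseteq\{0,1\}^n\subset\ell_1^{(n)}$ (with the $\ell_1$ metric) have cardinality greater than $n+1$. Then the generalized roundness of $S$ satisfies $\mathfrak{q}(S)=1$.
   Context: For $p\ge0$, $p$ is a generalized roundness exponent of a metric space $(X,d)$ if for all $m$ and all $a_1,\ldots,a_m,b_1,\ldots,b_m\in X$, $\sum_{k<l}\{d(a_k,a_l)^p+d(b_k,b_l)^p\}\le\sum_{j,i}d(a_j,b_i)^p$; the generalized roundness $\mathfrak{q}(X)$ is the supremum of all generalized roundness exponents. *)

theory Defs
  imports "HOL-Analysis.Analysis"
begin

definition gr_exponent :: "'a set \<Rightarrow> ('a \<Rightarrow> 'a \<Rightarrow> real) \<Rightarrow> real \<Rightarrow> bool" where
  "gr_exponent X d p \<longleftrightarrow> p \<ge> 0 \<and>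
     (\<forall>m::nat. \<forall>a b :: nat \<Rightarrow> 'a. (\<forall>k<m. a k \<in> X \<and> b k \<in> X) \<longrightarrow>
        (\<Sum>l<m. \<Sum>k<l. d (a k) (a l) powr p + d (b k) (b l) powr p)
          \<le> (\<Sum>j<m. \<Sum>i<m. d (a j) (b i) powr p))"

definition gen_roundness :: "'a set \<Rightarrow> ('a \<Rightarrow> 'a \<Rightarrow> real) \<Rightarrow> ereal" where
  "gen_roundness X d = Sup (ereal ` {p. gr_exponent X d p})"

definition l1_dist :: "real ^ 'n \<Rightarrow> real ^ 'n \<Rightarrow> real" where
  "l1_dist x y = (\<Sum>i\<in>UNIV. \<bar>x $ i - y $ i\<bar>)"

end

theory Submission
  imports Defs "HOL-Real_Asymp.Real_Asymp"
begin

text \<open>For points of the Hamming cube the roundness inequality with exponent 1 splits into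
  coordinates, and in one coordinate it reads \<open>0 \<le> (\<alpha> - \<beta>)\<^sup>2\<close>, where \<open>\<alpha>, \<beta>\<close> count the
  ones among the \<open>a\<^sub>k\<close> and the \<open>b\<^sub>k\<close>.

  Conversely, if \<open>p\<close> is a roundness exponent then \<open>d\<^sup>p\<close> is conditionally negative definite
  (first for integer weights, by repeating points, then for real weights by approximation), so by
  Schoenberg's theorem every \<open>exp (- t d\<^sup>p)\<close> is positive semidefinite. For \<open>p > 1\<close> the distance
  is a positive mixture \<open>d = C\<^sub>p \<integral>\<^sub>0\<^sup>\<infinity> (1 - exp (- (d/r)\<^sup>p)) dr\<close>, and the behaviour of the
  integrand near \<open>r = 0\<close> forces \<open>\<Sum>\<^sub>x\<^sub>,\<^sub>y c\<^sub>x c\<^sub>y d(x,y) < 0\<close> for every nonzero \<open>c\<close> of total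
  sum zero. But more than \<open>n + 1\<close> points of \<open>\<real>\<^sup>n\<close> admit an affine dependence \<open>c\<close>, and since
  \<open>d(x,y) = \<Sum>\<^sub>i x\<^sub>i + y\<^sub>i - 2 x\<^sub>i y\<^sub>i\<close> on the cube, this quadratic form vanishes for it.\<close>

section \<open>Positive semidefinite and conditionally negative definite kernels\<close>

definition psd_on :: "'a set \<Rightarrow> ('a \<Rightarrow> 'a \<Rightarrow> real) \<Rightarrow> bool" where
  "psd_on T K \<longleftrightarrow> (\<forall>w. 0 \<le> (\<Sum>x\<in>T. \<Sum>y\<in>T. w x * w y * K x y))"

definition cnd_on :: "'a set \<Rightarrow> ('a \<Rightarrow> 'a \<Rightarrow> real) \<Rightarrow> bool" where
  "cnd_on T N \<longleftrightarrow> (\<forall>v. sum v T = 0 \<longrightarrow> (\<Sum>x\<in>T. \<Sum>y\<in>T. v x * v y * N x y) \<le> 0)"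

lemma psd_onD: "psd_on T K \<Longrightarrow> 0 \<le> (\<Sum>x\<in>T. \<Sum>y\<in>T. w x * w y * K x y)"
  unfolding psd_on_def by blast

lemma psd_on_subset:
  assumes "psd_on T' K" "finite T'" "T \<subseteq> T'"
  shows "psd_on T K"
  unfolding psd_on_def
proof
  fix w :: "'a \<Rightarrow> real"
  let ?w = "\<lambda>x. if x \<in> T then w x else 0"
  have "0 \<le> (\<Sum>x\<in>T'. \<Sum>y\<in>T'. ?w x * ?w y * K x y)"
    using assms(1) by (rule psd_onD)
  also have "\<dots> = (\<Sum>x\<in>T. \<Sum>y\<in>T'. ?w x * ?w y * K x y)"
    by (rule sum.mono_neutral_cong_right[OF assms(2,3)]) auto
  also have "\<dots> = (\<Sum>x\<in>T. \<Sum>y\<in>T. w x * w y * K x y)"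
    by (intro sum.cong refl sum.mono_neutral_cong_right[OF assms(2,3)]) auto
  finally show "0 \<le> (\<Sum>x\<in>T. \<Sum>y\<in>T. w x * w y * K x y)" .
qed

lemma quadratic_form_add_point:
  fixes u :: "'a \<Rightarrow> real" and M :: "'a \<Rightarrow> 'a \<Rightarrow> real"
  assumes "finite T" "x0 \<in> T"
  shows "(\<Sum>x\<in>T. \<Sum>y\<in>T. (u x + (if x = x0 then t else 0)) * (u y + (if y = x0 then t else 0)) * M x y)
   = (\<Sum>x\<in>T. \<Sum>y\<in>T. u x * u y * M x y) + t * (\<Sum>y\<in>T. u y * M x0 y)
     + t * (\<Sum>x\<in>T. u x * M x x0) + t * t * M x0 x0"
proof -
  have expand: "(u x + (if x = x0 then t else 0)) * (u y + (if y = x0 then t else 0)) * M x y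
    = u x * u y * M x y + (if x = x0 then t * u y * M x0 y else 0)
      + (if y = x0 then t * u x * M x x0 else 0) + (if x = x0 then (if y = x0 then t * t * M x0 x0 else 0) else 0)"
    for x y
    by (cases "x = x0"; cases "y = x0") (simp_all add: ring_distribs)
  have if_out: "(\<Sum>y\<in>T. if P then f y else 0) = (if P then sum f T else 0)" for P and f :: "'a \<Rightarrow> real"
    by simp
  show ?thesis
    using assms
    by (simp only: expand sum.distrib)
       (simp add: if_out sum.delta sum_distrib_left[symmetric] mult.assoc
         sum.swap[of "\<lambda>x y. if y = x0 then _ x else 0"])
qed

lemma psd_on_diag_nonneg:
  assumes "psd_on T K" "finite T" "x0 \<in> T"
  shows "0 \<le> K x0 x0"
proof -
  have "0 \<le> (\<Sum>x\<in>T. \<Sum>y\<in>T. (0 + (if x = x0 then 1 else 0)) * (0 + (if y = x0 then 1 else 0)) * K x y)"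
    using assms(1) by (rule psd_onD)
  also have "\<dots> = K x0 x0"
    using quadratic_form_add_point[OF assms(2,3), of "\<lambda>_. 0" 1 K] by simp
  finally show ?thesis .
qed

lemma psd_on_Cauchy_Schwarz:
  fixes K :: "'a \<Rightarrow> 'a \<Rightarrow> real"
  assumes "psd_on T K" "finite T" "x0 \<in> T"
    and sym: "\<And>x y. x \<in> T \<Longrightarrow> y \<in> T \<Longrightarrow> K x y = K y x"
  shows "(\<Sum>x\<in>T. w x * K x x0)\<^sup>2 \<le> K x0 x0 * (\<Sum>x\<in>T. \<Sum>y\<in>T. w x * w y * K x y)"
proof -
  define B where "B = (\<Sum>x\<in>T. w x * K x x0)"
  define Q where "Q = (\<Sum>x\<in>T. \<Sum>y\<in>T. w x * w y * K x y)"
  define k0 where "k0 = K x0 x0"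
  have B_sym: "(\<Sum>y\<in>T. w y * K x0 y) = B"
    unfolding B_def by (rule sum.cong) (use assms(3) sym in auto)
  have quadratic: "0 \<le> Q + 2 * t * B + t * t * k0" for t
  proof -
    have "0 \<le> (\<Sum>x\<in>T. \<Sum>y\<in>T. (w x + (if x = x0 then t else 0)) * (w y + (if y = x0 then t else 0)) * K x y)"
      using assms(1) by (rule psd_onD)
    also have "\<dots> = Q + 2 * t * B + t * t * k0"
      unfolding quadratic_form_add_point[OF assms(2,3)] B_sym by (simp add: Q_def B_def k0_def)
    finally show ?thesis .
  qed
  have "0 \<le> k0"
    unfolding k0_def by (rule psd_on_diag_nonneg[OF assms(1-3)])
  show ?thesis
  proof (cases "k0 = 0")
    case True
    have "B = 0"
    proof (rule ccontr)
      assume "B \<noteq> 0"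
      have "0 \<le> Q + 2 * (-(Q+1)/(2*B)) * B + (-(Q+1)/(2*B)) * (-(Q+1)/(2*B)) * k0"
        by (rule quadratic)
      also have "\<dots> = -1" using \<open>B \<noteq> 0\<close> True by (simp add: field_simps)
      finally show False by simp
    qed
    then show ?thesis using True by (simp add: B_def k0_def)
  next
    case False
    with \<open>0 \<le> k0\<close> have "k0 > 0" by simp
    have "0 \<le> Q + 2 * (-B/k0) * B + (-B/k0) * (-B/k0) * k0"
      by (rule quadratic)
    also have "\<dots> = Q - B\<^sup>2 / k0"
      using \<open>k0 > 0\<close> by (simp add: field_simps power2_eq_square)
    finally have "B\<^sup>2 \<le> k0 * Q"
      using \<open>k0 > 0\<close> by (simp add: field_simps)
    then show ?thesis by (simp add: B_def Q_def k0_def)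
  qed
qed

lemma psd_on_diag_zero_imp_row_zero:
  assumes "psd_on T K" "finite T" "x0 \<in> T" "y \<in> T" "K x0 x0 = 0"
    and sym: "\<And>x y. x \<in> T \<Longrightarrow> y \<in> T \<Longrightarrow> K x y = K y x"
  shows "K y x0 = 0"
proof -
  have "(\<Sum>x\<in>T. (if x = y then 1 else 0) * K x x0)\<^sup>2 \<le> 0"
    using psd_on_Cauchy_Schwarz[OF assms(1-3) sym, of "\<lambda>x. if x = y then 1 else 0"] assms(5)
    by simp
  then show ?thesis
    using assms(2,4) by (simp add: of_bool_def[symmetric])
qed

lemma psd_on_minus_rank_one:
  fixes K :: "'a \<Rightarrow> 'a \<Rightarrow> real"
  assumes "psd_on T K" "finite T" "x0 \<in> T" "K x0 x0 > 0"
    and sym: "\<And>x y. x \<in> T \<Longrightarrow> y \<in> T \<Longrightarrow> K x y = K y x"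
  shows "psd_on T (\<lambda>x y. K x y - K x x0 * K y x0 / K x0 x0)"
  unfolding psd_on_def
proof
  fix w :: "'a \<Rightarrow> real"
  have "(\<Sum>x\<in>T. \<Sum>y\<in>T. w x * w y * (K x y - K x x0 * K y x0 / K x0 x0))
      = (\<Sum>x\<in>T. \<Sum>y\<in>T. w x * w y * K x y) - (\<Sum>x\<in>T. w x * K x x0)\<^sup>2 / K x0 x0"
    by (simp add: algebra_simps sum_subtractf power2_eq_square sum_product sum_divide_distrib)
  also have "\<dots> \<ge> 0"
    using psd_on_Cauchy_Schwarz[OF assms(1-3) sym, of w] assms(4)
    by (simp add: divide_le_eq mult.commute)
  finally show "0 \<le> (\<Sum>x\<in>T. \<Sum>y\<in>T. w x * w y * (K x y - K x x0 * K y x0 / K x0 x0))" .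
qed

lemma psd_on_split_rank_one:
  fixes K :: "'a \<Rightarrow> 'a \<Rightarrow> real"
  assumes "psd_on T K" "finite T" "x0 \<in> T"
    and sym: "\<And>x y. x \<in> T \<Longrightarrow> y \<in> T \<Longrightarrow> K x y = K y x"
  obtains u where "\<And>y. y \<in> T \<Longrightarrow> K y x0 = u x0 * u y"
    and "psd_on T (\<lambda>x y. K x y - u x * u y)"
proof -
  define u where "u x = (if K x0 x0 > 0 then K x x0 / sqrt (K x0 x0) else 0)" for x
  have "K y x0 = u x0 * u y" if "y \<in> T" for y
  proof (cases "K x0 x0 > 0")
    case True
    then have "u x0 * u y = K y x0 * (K x0 x0 / (sqrt (K x0 x0) * sqrt (K x0 x0)))"
      unfolding u_def by simp
    then show ?thesis using True by simp
  next
    case False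
    then have "K x0 x0 = 0" using psd_on_diag_nonneg[OF assms(1-3)] by simp
    then show ?thesis
      using psd_on_diag_zero_imp_row_zero[OF assms(1-3) that _ sym] False
      by (simp add: u_def)
  qed
  moreover have "psd_on T (\<lambda>x y. K x y - u x * u y)"
  proof (cases "K x0 x0 > 0")
    case True
    then have "u x * u y = K x x0 * K y x0 / K x0 x0" for x y
      unfolding u_def by (simp add: real_sqrt_mult[symmetric])
    then show ?thesis using psd_on_minus_rank_one[OF assms(1-3) True sym] by simp
  next
    case False
    then show ?thesis using assms(1) by (simp add: u_def)
  qed
  ultimately show ?thesis by (rule that)
qed

lemma psd_on_Gram:
  fixes K :: "'a \<Rightarrow> 'a \<Rightarrow> real"
  assumes "finite T" "psd_on T K" "\<And>x y. x \<in> T \<Longrightarrow> y \<in> T \<Longrightarrow> K x y = K y x"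
  shows "\<exists>us. \<forall>x\<in>T. \<forall>y\<in>T. K x y = (\<Sum>u\<leftarrow>us. u x * u y)"
  using assms
proof (induction T arbitrary: K rule: finite_induct)
  case empty
  then show ?case by auto
next
  case (insert x0 T)
  let ?T = "insert x0 T"
  note sym = insert.prems(2)
  obtain u where column: "\<And>y. y \<in> ?T \<Longrightarrow> K y x0 = u x0 * u y"
    and psd: "psd_on ?T (\<lambda>x y. K x y - u x * u y)"
    using psd_on_split_rank_one[OF insert.prems(1) _ _ sym] insert.hyps by blast
  have "psd_on T (\<lambda>x y. K x y - u x * u y)"
    by (rule psd_on_subset[OF psd]) (use insert.hyps in auto)
  moreover have "K x y - u x * u y = K y x - u y * u x" if "x \<in> T" "y \<in> T" for x y
    using sym that by simp
  ultimately obtain us where us: "\<forall>x\<in>T. \<forall>y\<in>T. K x y - u x * u y = (\<Sum>v\<leftarrow>us. v x * v y)"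
    using insert.IH by blast
  show ?case
  proof (intro exI[of _ "u # map (\<lambda>f. f(x0 := 0)) us"] ballI)
    fix x y assume x: "x \<in> ?T" and y: "y \<in> ?T"
    consider "x = x0" | "y = x0" | "x \<in> T" "y \<in> T" "x \<noteq> x0" "y \<noteq> x0"
      using x y by auto
    then show "K x y = (\<Sum>f\<leftarrow>u # map (\<lambda>f. f(x0 := 0)) us. f x * f y)"
    proof cases
      case 1
      then show ?thesis using column[OF y] sym[OF x y] by (simp add: o_def mult.commute)
    next
      case 2
      then show ?thesis using column[OF x] by (simp add: o_def)
    next
      case 3
      then show ?thesis using us by (simp add: o_def algebra_simps)
    qed
  qed
qed

lemma psd_on_mult_Gram:
  fixes B :: "'a \<Rightarrow> 'a \<Rightarrow> real"
  assumes "psd_on T B"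
  shows "psd_on T (\<lambda>x y. (\<Sum>u\<leftarrow>us. u x * u y) * B x y)"
  unfolding psd_on_def
proof
  fix w :: "'a \<Rightarrow> real"
  have "(\<Sum>x\<in>T. \<Sum>y\<in>T. w x * w y * ((\<Sum>u\<leftarrow>us. u x * u y) * B x y))
     = (\<Sum>u\<leftarrow>us. \<Sum>x\<in>T. \<Sum>y\<in>T. (w x * u x) * (w y * u y) * B x y)"
  proof (induction us)
    case (Cons v us)
    have "(\<Sum>x\<in>T. \<Sum>y\<in>T. w x * w y * ((\<Sum>u\<leftarrow>v # us. u x * u y) * B x y))
      = (\<Sum>x\<in>T. \<Sum>y\<in>T. (w x * v x) * (w y * v y) * B x y + w x * w y * ((\<Sum>u\<leftarrow>us. u x * u y) * B x y))"
      by (intro sum.cong refl) (simp add: distrib_right distrib_left mult_ac)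
    then show ?case using Cons by (simp add: sum.distrib)
  qed simp
  also have "\<dots> \<ge> 0"
    by (rule sum_list_nonneg) (use assms in \<open>auto simp: psd_on_def\<close>)
  finally show "0 \<le> (\<Sum>x\<in>T. \<Sum>y\<in>T. w x * w y * ((\<Sum>u\<leftarrow>us. u x * u y) * B x y))" .
qed

lemma psd_on_cong:
  assumes "psd_on T K" "\<And>x y. x \<in> T \<Longrightarrow> y \<in> T \<Longrightarrow> K x y = K' x y"
  shows "psd_on T K'"
  unfolding psd_on_def
proof
  fix w :: "'a \<Rightarrow> real"
  have "(\<Sum>x\<in>T. \<Sum>y\<in>T. w x * w y * K' x y) = (\<Sum>x\<in>T. \<Sum>y\<in>T. w x * w y * K x y)"
    using assms(2) by (intro sum.cong refl) simp
  then show "0 \<le> (\<Sum>x\<in>T. \<Sum>y\<in>T. w x * w y * K' x y)" using psd_onD[OF assms(1)] by simp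
qed

lemma psd_on_power:
  fixes K :: "'a \<Rightarrow> 'a \<Rightarrow> real"
  assumes "finite T" "psd_on T K" "\<And>x y. x \<in> T \<Longrightarrow> y \<in> T \<Longrightarrow> K x y = K y x"
  shows "psd_on T (\<lambda>x y. K x y ^ n)"
proof (induction n)
  case 0
  have "(\<Sum>x\<in>T. \<Sum>y\<in>T. w x * w y) = (\<Sum>x\<in>T. w x)\<^sup>2" for w :: "'a \<Rightarrow> real"
    by (simp add: power2_eq_square sum_product)
  then show ?case unfolding psd_on_def by simp
next
  case (Suc n)
  obtain us where "\<forall>x\<in>T. \<forall>y\<in>T. K x y = (\<Sum>u\<leftarrow>us. u x * u y)"
    using psd_on_Gram[OF assms] by blast
  then show ?case
    by (intro psd_on_cong[OF psd_on_mult_Gram[OF Suc, of us]]) simp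
qed

lemma psd_on_exp:
  fixes K :: "'a \<Rightarrow> 'a \<Rightarrow> real"
  assumes "finite T" "psd_on T K" "\<And>x y. x \<in> T \<Longrightarrow> y \<in> T \<Longrightarrow> K x y = K y x" "0 \<le> t"
  shows "psd_on T (\<lambda>x y. exp (t * K x y))"
  unfolding psd_on_def
proof
  fix w :: "'a \<Rightarrow> real"
  have series: "(\<lambda>n. \<Sum>x\<in>T. \<Sum>y\<in>T. w x * w y * ((t * K x y) ^ n /\<^sub>R fact n)) sums
        (\<Sum>x\<in>T. \<Sum>y\<in>T. w x * w y * exp (t * K x y))"
    by (intro sums_sum sums_mult exp_converges)
  have terms_nonneg: "0 \<le> (\<Sum>x\<in>T. \<Sum>y\<in>T. w x * w y * ((t * K x y) ^ n /\<^sub>R fact n))" for n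
  proof -
    have "(\<Sum>x\<in>T. \<Sum>y\<in>T. w x * w y * ((t * K x y) ^ n /\<^sub>R fact n))
        = (t ^ n / fact n) * (\<Sum>x\<in>T. \<Sum>y\<in>T. w x * w y * K x y ^ n)"
      unfolding sum_distrib_left
      by (intro sum.cong refl) (simp add: power_mult_distrib divide_inverse mult_ac)
    also have "\<dots> \<ge> 0"
      using psd_onD[OF psd_on_power[OF assms(1-3)]] assms(4) by simp
    finally show ?thesis .
  qed
  show "0 \<le> (\<Sum>x\<in>T. \<Sum>y\<in>T. w x * w y * exp (t * K x y))"
    by (rule sums_le[OF terms_nonneg sums_zero series])
qed

lemma psd_on_of_cnd:
  fixes N :: "'a \<Rightarrow> 'a \<Rightarrow> real"
  assumes "finite S" "x0 \<in> S" "cnd_on S N" "N x0 x0 = 0"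
    and sym: "\<And>x y. x \<in> S \<Longrightarrow> y \<in> S \<Longrightarrow> N x y = N y x"
  shows "psd_on S (\<lambda>x y. N x x0 + N y x0 - N x y)"
  unfolding psd_on_def
proof
  fix u :: "'a \<Rightarrow> real"
  define s where "s = sum u S"
  define P where "P = (\<Sum>x\<in>S. u x * N x x0)"
  define Q where "Q = (\<Sum>x\<in>S. \<Sum>y\<in>S. u x * u y * N x y)"
  have P_sym: "(\<Sum>y\<in>S. u y * N x0 y) = P"
    unfolding P_def by (rule sum.cong) (use sym assms(2) in auto)
  \<comment> \<open>shifting the mass of \<open>u\<close> onto \<open>x0\<close> gives a test vector of total sum zero\<close>
  have "sum (\<lambda>x. u x + (if x = x0 then -s else 0)) S = 0"
    using assms(1,2) by (simp add: sum.distrib s_def)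
  then have "(\<Sum>x\<in>S. \<Sum>y\<in>S. (u x + (if x = x0 then -s else 0)) * (u y + (if y = x0 then -s else 0)) * N x y) \<le> 0"
    using assms(3) unfolding cnd_on_def by blast
  then have "Q - 2 * s * P \<le> 0"
    unfolding quadratic_form_add_point[OF assms(1,2)] P_sym assms(4) by (simp add: Q_def P_def)
  moreover have "(\<Sum>x\<in>S. \<Sum>y\<in>S. u x * u y * (N x x0 + N y x0 - N x y)) = 2 * s * P - Q"
  proof -
    have "(\<Sum>x\<in>S. \<Sum>y\<in>S. u x * u y * (N x x0 + N y x0 - N x y))
      = (\<Sum>x\<in>S. \<Sum>y\<in>S. (u x * N x x0) * u y) + (\<Sum>x\<in>S. \<Sum>y\<in>S. u x * (u y * N y x0)) - Q"
      unfolding Q_def by (simp add: sum_subtractf sum.distrib algebra_simps)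
    also have "\<dots> = P * s + s * P - Q"
      unfolding P_def s_def sum_product ..
    finally show ?thesis by simp
  qed
  ultimately show "0 \<le> (\<Sum>x\<in>S. \<Sum>y\<in>S. u x * u y * (N x x0 + N y x0 - N x y))" by simp
qed

theorem psd_on_exp_neg_cnd:
  fixes N :: "'a \<Rightarrow> 'a \<Rightarrow> real"
  assumes "finite S" "x0 \<in> S" "cnd_on S N" "N x0 x0 = 0"
    and sym: "\<And>x y. x \<in> S \<Longrightarrow> y \<in> S \<Longrightarrow> N x y = N y x"
    and "0 \<le> t"
  shows "psd_on S (\<lambda>x y. exp (- (t * N x y)))"
  unfolding psd_on_def
proof
  fix w :: "'a \<Rightarrow> real"
  define K where "K x y = N x x0 + N y x0 - N x y" for x y
  define e where "e x = exp (- (t * N x x0))" for x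
  have "psd_on S (\<lambda>x y. exp (t * K x y))"
  proof (rule psd_on_exp[OF assms(1) _ _ assms(6)])
    show "psd_on S K" unfolding K_def by (rule psd_on_of_cnd[OF assms(1-4) sym])
    show "K x y = K y x" if "x \<in> S" "y \<in> S" for x y unfolding K_def using sym[OF that] by simp
  qed
  then have "0 \<le> (\<Sum>x\<in>S. \<Sum>y\<in>S. (w x * e x) * (w y * e y) * exp (t * K x y))"
    by (rule psd_onD)
  also have "\<dots> = (\<Sum>x\<in>S. \<Sum>y\<in>S. w x * w y * exp (- (t * N x y)))"
  proof (intro sum.cong refl)
    fix x y
    have "e x * e y * exp (t * K x y) = exp (- (t * N x x0) + - (t * N y x0) + t * K x y)"
      unfolding e_def by (simp only: exp_add)
    also have "\<dots> = exp (- (t * N x y))" unfolding K_def by (simp add: algebra_simps)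
    finally show "(w x * e x) * (w y * e y) * exp (t * K x y) = w x * w y * exp (- (t * N x y))"
      by (metis mult.commute mult.left_commute)
  qed
  finally show "0 \<le> (\<Sum>x\<in>S. \<Sum>y\<in>S. w x * w y * exp (- (t * N x y)))" .
qed

section \<open>Roundness exponents give conditionally negative definite kernels\<close>

lemma sum_lower_triangle_symmetric:
  fixes g :: "nat \<Rightarrow> nat \<Rightarrow> real"
  assumes "\<And>k l. g k l = g l k" "\<And>k. g k k = 0"
  shows "2 * (\<Sum>l<m. \<Sum>k<l. g k l) = (\<Sum>l<m. \<Sum>k<m. g k l)"
proof (induction m)
  case (Suc m)
  have "(\<Sum>l<Suc m. \<Sum>k<Suc m. g k l)
      = (\<Sum>l<m. \<Sum>k<m. g k l) + (\<Sum>l<m. g m l) + (\<Sum>k<m. g k m) + g m m"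
    by (simp add: sum.distrib)
  also have "(\<Sum>l<m. g m l) = (\<Sum>k<m. g k m)"
    using assms(1) by (intro sum.cong refl) auto
  finally show ?case using Suc assms(2) by (simp add: algebra_simps)
qed simp

lemma obtain_enumeration_with_multiplicities:
  fixes \<alpha> :: "'a \<Rightarrow> nat"
  assumes "finite S"
  obtains f :: "nat \<Rightarrow> 'a"
  where "\<forall>k < sum \<alpha> S. f k \<in> S"
    and "\<And>F :: 'a \<Rightarrow> real. (\<Sum>k < sum \<alpha> S. F (f k)) = (\<Sum>x\<in>S. real (\<alpha> x) * F x)"
proof -
  obtain xs where xs: "set xs = S" "distinct xs"
    using finite_distinct_list[OF assms] by blast
  define ys where "ys = concat (map (\<lambda>x. replicate (\<alpha> x) x) xs)"
  have "length ys = sum \<alpha> S"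
    unfolding ys_def using xs sum.distinct_set_conv_list[of xs \<alpha>] by (simp add: length_concat o_def)
  moreover have "set ys \<subseteq> S"
    unfolding ys_def using xs by auto
  moreover have "(\<Sum>k < length ys. F (ys ! k)) = (\<Sum>x\<in>S. real (\<alpha> x) * F x)" for F :: "'a \<Rightarrow> real"
  proof -
    have "(\<Sum>k < length ys. F (ys ! k)) = sum_list (map F ys)"
      by (simp add: sum_list_sum_nth atLeast0LessThan)
    also have "\<dots> = (\<Sum>x\<leftarrow>xs. real (\<alpha> x) * F x)"
      unfolding ys_def by (induction xs) (simp_all add: sum_list_replicate)
    finally show ?thesis
      using xs sum.distinct_set_conv_list[of xs "\<lambda>x. real (\<alpha> x) * F x"] by simp
  qed
  ultimately show ?thesis
    by (intro that[of "(!) ys"]) (auto intro: nth_mem[THEN subsetD[rotated]])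
qed

lemma sum_sum_reindex_by_weights:
  fixes N :: "'a \<Rightarrow> 'a \<Rightarrow> real"
  assumes f: "\<And>F. (\<Sum>k<m. F (f k)) = (\<Sum>x\<in>S. \<mu> x * F x)"
    and g: "\<And>F. (\<Sum>k<m. F (g k)) = (\<Sum>x\<in>S. \<nu> x * F x)"
  shows "(\<Sum>l<m. \<Sum>k<m. N (f k) (g l)) = (\<Sum>x\<in>S. \<Sum>y\<in>S. \<mu> x * \<nu> y * N x y)"
proof -
  have "(\<Sum>l<m. \<Sum>k<m. N (f k) (g l)) = (\<Sum>l<m. \<Sum>x\<in>S. \<mu> x * N x (g l))"
    by (intro sum.cong refl) (rule f)
  also have "\<dots> = (\<Sum>x\<in>S. \<mu> x * (\<Sum>l<m. N x (g l)))"
    by (subst sum.swap) (simp add: sum_distrib_left)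
  also have "\<dots> = (\<Sum>x\<in>S. \<Sum>y\<in>S. \<mu> x * \<nu> y * N x y)"
    by (simp add: g sum_distrib_left mult.assoc)
  finally show ?thesis .
qed

lemma gr_exponent_nat_weights:
  fixes d :: "'a \<Rightarrow> 'a \<Rightarrow> real" and \<alpha> \<beta> :: "'a \<Rightarrow> nat"
  assumes "finite S" "gr_exponent S d p"
    and sym: "\<And>x y. d x y = d y x" and diag: "\<And>x. d x x = 0"
    and "sum \<alpha> S = sum \<beta> S"
  defines "N \<equiv> \<lambda>x y. d x y powr p"
  shows "(\<Sum>x\<in>S. \<Sum>y\<in>S. real (\<alpha> x) * real (\<alpha> y) * N x y)
       + (\<Sum>x\<in>S. \<Sum>y\<in>S. real (\<beta> x) * real (\<beta> y) * N x y)
       \<le> 2 * (\<Sum>x\<in>S. \<Sum>y\<in>S. real (\<alpha> x) * real (\<beta> y) * N x y)"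
proof -
  define m where "m = sum \<alpha> S"
  obtain a where a: "\<forall>k<m. a k \<in> S" "\<And>F. (\<Sum>k<m. F (a k)) = (\<Sum>x\<in>S. real (\<alpha> x) * F x)"
    unfolding m_def using obtain_enumeration_with_multiplicities[OF assms(1)] by metis
  obtain b where b: "\<forall>k<m. b k \<in> S" "\<And>F. (\<Sum>k<m. F (b k)) = (\<Sum>x\<in>S. real (\<beta> x) * F x)"
    unfolding m_def assms(5) using obtain_enumeration_with_multiplicities[OF assms(1)] by metis
  have "2 * (\<Sum>l<m. \<Sum>k<l. N (a k) (a l) + N (b k) (b l))
      = (\<Sum>l<m. \<Sum>k<m. N (a k) (a l)) + (\<Sum>l<m. \<Sum>k<m. N (b k) (b l))"
    by (subst sum_lower_triangle_symmetric) (simp_all add: N_def sym diag sum.distrib)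
  also have "\<dots> = (\<Sum>x\<in>S. \<Sum>y\<in>S. real (\<alpha> x) * real (\<alpha> y) * N x y)
       + (\<Sum>x\<in>S. \<Sum>y\<in>S. real (\<beta> x) * real (\<beta> y) * N x y)"
    using sum_sum_reindex_by_weights[OF a(2) a(2)] sum_sum_reindex_by_weights[OF b(2) b(2)]
    by simp
  finally have lhs: "2 * (\<Sum>l<m. \<Sum>k<l. N (a k) (a l) + N (b k) (b l))
      = (\<Sum>x\<in>S. \<Sum>y\<in>S. real (\<alpha> x) * real (\<alpha> y) * N x y)
       + (\<Sum>x\<in>S. \<Sum>y\<in>S. real (\<beta> x) * real (\<beta> y) * N x y)" .
  have rhs: "(\<Sum>j<m. \<Sum>i<m. N (a j) (b i)) = (\<Sum>x\<in>S. \<Sum>y\<in>S. real (\<alpha> x) * real (\<beta> y) * N x y)"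
    by (subst sum.swap) (rule sum_sum_reindex_by_weights[OF a(2) b(2)])
  have "(\<Sum>l<m. \<Sum>k<l. N (a k) (a l) + N (b k) (b l)) \<le> (\<Sum>j<m. \<Sum>i<m. N (a j) (b i))"
    using assms(2) a(1) b(1) unfolding gr_exponent_def N_def by blast
  then show ?thesis unfolding rhs lhs[symmetric] by simp
qed

lemma gr_exponent_int_cnd:
  fixes d :: "'a \<Rightarrow> 'a \<Rightarrow> real" and v :: "'a \<Rightarrow> int"
  assumes "finite S" "gr_exponent S d p"
    and sym: "\<And>x y. d x y = d y x" and diag: "\<And>x. d x x = 0"
    and "sum v S = 0"
  shows "(\<Sum>x\<in>S. \<Sum>y\<in>S. of_int (v x) * of_int (v y) * d x y powr p) \<le> 0"
proof -
  define N where "N x y = d x y powr p" for x y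
  define \<alpha> where "\<alpha> x = nat (v x)" for x
  define \<beta> where "\<beta> x = nat (- v x)" for x
  define Q where "Q \<mu> \<nu> = (\<Sum>x\<in>S. \<Sum>y\<in>S. real (\<mu> x) * real (\<nu> y) * N x y)" for \<mu> \<nu> :: "'a \<Rightarrow> nat"
  have "int (sum \<alpha> S) - int (sum \<beta> S) = sum v S"
    unfolding \<alpha>_def \<beta>_def of_nat_sum sum_subtractf[symmetric] by (intro sum.cong refl) simp
  then have "sum \<alpha> S = sum \<beta> S" using assms(5) by (simp del: of_nat_sum)
  then have "Q \<alpha> \<alpha> + Q \<beta> \<beta> \<le> 2 * Q \<alpha> \<beta>"
    unfolding Q_def N_def by (rule gr_exponent_nat_weights[OF assms(1-4)])
  moreover have "Q \<beta> \<alpha> = Q \<alpha> \<beta>"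
    unfolding Q_def by (subst sum.swap) (simp add: N_def sym mult_ac)
  moreover have "(\<Sum>x\<in>S. \<Sum>y\<in>S. of_int (v x) * of_int (v y) * N x y) = Q \<alpha> \<alpha> + Q \<beta> \<beta> - Q \<alpha> \<beta> - Q \<beta> \<alpha>"
  proof -
    have v_split: "real_of_int (v x) = real (\<alpha> x) - real (\<beta> x)" for x
      unfolding \<alpha>_def \<beta>_def by simp
    show ?thesis
      unfolding Q_def v_split by (simp add: algebra_simps sum.distrib sum_subtractf)
  qed
  ultimately show ?thesis unfolding N_def by simp
qed

lemma floor_mult_div_tendsto:
  "(\<lambda>k. real_of_int \<lfloor>real (Suc k) * a\<rfloor> / real (Suc k)) \<longlonglongrightarrow> a"
proof (rule real_tendsto_sandwich)
  show "\<forall>\<^sub>F k in sequentially. a - inverse (real (Suc k)) \<le> real_of_int \<lfloor>real (Suc k) * a\<rfloor> / real (Suc k)"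
  proof (rule always_eventually, rule allI)
    fix k
    have "real (Suc k) * a - 1 \<le> real_of_int \<lfloor>real (Suc k) * a\<rfloor>" by linarith
    then have "(real (Suc k) * a - 1) / real (Suc k) \<le> real_of_int \<lfloor>real (Suc k) * a\<rfloor> / real (Suc k)"
      by (intro divide_right_mono) auto
    then show "a - inverse (real (Suc k)) \<le> real_of_int \<lfloor>real (Suc k) * a\<rfloor> / real (Suc k)"
      by (simp add: field_simps del: of_nat_Suc)
  qed
  show "\<forall>\<^sub>F k in sequentially. real_of_int \<lfloor>real (Suc k) * a\<rfloor> / real (Suc k) \<le> a"
  proof (rule always_eventually, rule allI)
    fix k
    have "real_of_int \<lfloor>real (Suc k) * a\<rfloor> \<le> real (Suc k) * a" by linarith
    then show "real_of_int \<lfloor>real (Suc k) * a\<rfloor> / real (Suc k) \<le> a"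
      by (simp add: divide_le_eq mult.commute del: of_nat_Suc)
  qed
  show "(\<lambda>k. a - inverse (real (Suc k))) \<longlonglongrightarrow> a"
    using tendsto_diff[OF tendsto_const LIMSEQ_inverse_real_of_nat, of a] by simp
qed simp

lemma obtain_integer_approximation_sum_zero:
  fixes w :: "'a \<Rightarrow> real"
  assumes "finite S" "x0 \<in> S" "sum w S = 0"
  obtains r :: "nat \<Rightarrow> 'a \<Rightarrow> int"
  where "\<And>k. sum (r k) S = 0"
    and "\<And>x. x \<in> S \<Longrightarrow> (\<lambda>k. real_of_int (r k x) / real (Suc k)) \<longlonglongrightarrow> w x"
proof -
  \<comment> \<open>round \<open>(k + 1) w\<close> down, and correct at \<open>x0\<close> to keep the total sum zero\<close>
  define fl where "fl k x = \<lfloor>real (Suc k) * w x\<rfloor>" for k x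
  define r where "r k x = (if x = x0 then - (\<Sum>y\<in>S - {x0}. fl k y) else fl k x)" for k x
  have "sum (r k) S = 0" for k
  proof -
    have "sum (r k) S = r k x0 + sum (r k) (S - {x0})"
      using assms(1,2) by (simp add: sum.remove)
    also have "sum (r k) (S - {x0}) = (\<Sum>y\<in>S - {x0}. fl k y)"
      unfolding r_def by (intro sum.cong) auto
    finally show ?thesis unfolding r_def by simp
  qed
  moreover have "(\<lambda>k. real_of_int (r k x) / real (Suc k)) \<longlonglongrightarrow> w x" if "x \<in> S" for x
  proof (cases "x = x0")
    case True
    have "(\<lambda>k. - (\<Sum>y\<in>S - {x0}. real_of_int (fl k y) / real (Suc k))) \<longlonglongrightarrow> - (\<Sum>y\<in>S - {x0}. w y)"
      unfolding fl_def by (intro tendsto_minus tendsto_sum floor_mult_div_tendsto)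
    moreover have "- (\<Sum>y\<in>S - {x0}. w y) = w x0"
      using assms by (simp add: sum.remove)
    ultimately show ?thesis using True unfolding r_def by (simp add: sum_divide_distrib)
  next
    case False
    then show ?thesis unfolding r_def fl_def using floor_mult_div_tendsto by simp
  qed
  ultimately show ?thesis by (rule that)
qed

lemma cnd_on_of_int:
  fixes N :: "'a \<Rightarrow> 'a \<Rightarrow> real"
  assumes "finite S"
    and int_cnd: "\<And>v :: 'a \<Rightarrow> int. sum v S = 0 \<Longrightarrow>
       (\<Sum>x\<in>S. \<Sum>y\<in>S. of_int (v x) * of_int (v y) * N x y) \<le> 0"
  shows "cnd_on S N"
  unfolding cnd_on_def
proof (intro allI impI)
  fix w :: "'a \<Rightarrow> real"
  assume w: "sum w S = 0"
  define q where "q u = (\<Sum>x\<in>S. \<Sum>y\<in>S. u x * u y * N x y)" for u :: "'a \<Rightarrow> real"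
  show "q w \<le> 0"
  proof (cases "S = {}")
    case True
    then show ?thesis by (simp add: q_def)
  next
    case False
    then obtain x0 where "x0 \<in> S" by blast
    then obtain r where r_sum: "\<And>k. sum (r k) S = 0"
      and r_lim: "\<And>x. x \<in> S \<Longrightarrow> (\<lambda>k. real_of_int (r k x) / real (Suc k)) \<longlonglongrightarrow> w x"
      using obtain_integer_approximation_sum_zero[OF assms(1) _ w] by metis
    have "q (\<lambda>x. real_of_int (r k x) / real (Suc k)) \<le> 0" for k
    proof -
      have "q (\<lambda>x. real_of_int (r k x) / real (Suc k)) = q (\<lambda>x. real_of_int (r k x)) / (real (Suc k))\<^sup>2"
        unfolding q_def by (simp add: sum_divide_distrib power2_eq_square)
      moreover have "q (\<lambda>x. real_of_int (r k x)) \<le> 0"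
        unfolding q_def by (rule int_cnd[OF r_sum])
      ultimately show ?thesis by (simp add: divide_nonpos_pos)
    qed
    moreover have "(\<lambda>k. q (\<lambda>x. real_of_int (r k x) / real (Suc k))) \<longlonglongrightarrow> q w"
      unfolding q_def by (intro tendsto_sum tendsto_mult tendsto_const r_lim)
    ultimately show "q w \<le> 0"
      using LIMSEQ_le_const2 by blast
  qed
qed

theorem gr_exponent_imp_cnd_on:
  fixes d :: "'a \<Rightarrow> 'a \<Rightarrow> real"
  assumes "finite S" "gr_exponent S d p"
    and "\<And>x y. d x y = d y x" "\<And>x. d x x = 0"
  shows "cnd_on S (\<lambda>x y. d x y powr p)"
  using assms(1) gr_exponent_int_cnd[OF assms] by (rule cnd_on_of_int)

section \<open>Exponents above one are strict\<close>

definition exp_gap :: "real \<Rightarrow> real \<Rightarrow> real \<Rightarrow> real" where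
  "exp_gap p d r = (if 0 < r then 1 - exp (- (d powr p / r powr p)) else 0)"

lemma exp_gap_measurable [measurable]: "exp_gap p d \<in> borel_measurable lborel"
  unfolding exp_gap_def by measurable

lemma exp_gap_nonneg: "0 \<le> exp_gap p d r"
  unfolding exp_gap_def by auto

lemma exp_gap_scale: "d > 0 \<Longrightarrow> exp_gap p d (d * r) = exp_gap p 1 r"
  unfolding exp_gap_def by (auto simp: powr_mult zero_less_mult_iff)

lemma integrable_exp_gap_1:
  assumes "p > 1"
  shows "integrable lborel (exp_gap p 1)"
proof -
  \<comment> \<open>integrable majorant: \<open>1\<close> on \<open>(0,1]\<close> and \<open>1 - exp (- r powr -p) \<le> r powr -p\<close> on \<open>[1,\<infinity>)\<close>\<close>
  define h where "h r = indicator {0<..1} r + indicator {1..} r * r powr (-p)" for r :: real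
  have "((\<lambda>x::real. x powr (-p)) has_integral -(1 powr (-p+1)) / (-p+1)) {1..}"
    by (rule has_integral_powr_to_inf) (use assms in auto)
  then have "integral\<^sup>N lborel (\<lambda>x. indicator {1..} x * x powr (-p)) = ennreal (-(1 powr (-p+1)) / (-p+1))"
    by (intro nn_integral_has_integral_lebesgue) auto
  then have "integrable lborel (\<lambda>x. indicator {1..} x * x powr (-p))"
    by (intro integrableI_nonneg) (auto simp: indicator_def)
  then have h: "integrable lborel h"
    unfolding h_def by (intro Bochner_Integration.integrable_add integrable_real_indicator) auto
  have bound: "exp_gap p 1 r \<le> h r" for r
  proof (cases "0 < r")
    case True
    have "exp_gap p 1 r \<le> 1" unfolding exp_gap_def by simp
    moreover have "exp_gap p 1 r \<le> r powr (-p)"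
      using exp_ge_add_one_self[of "- (1 / r powr p)"] True
      by (simp add: exp_gap_def powr_minus_divide)
    ultimately show ?thesis using True by (auto simp: h_def indicator_def)
  qed (simp add: exp_gap_def h_def)
  show ?thesis
  proof (rule Bochner_Integration.integrable_bound[OF h exp_gap_measurable AE_I2])
    show "norm (exp_gap p 1 r) \<le> norm (h r)" for r
      using bound[of r] exp_gap_nonneg[of p 1 r] by simp
  qed
qed

lemma has_bochner_integral_exp_gap:
  assumes "p > 1" "d \<ge> 0"
  shows "has_bochner_integral lborel (exp_gap p d) (d * integral\<^sup>L lborel (exp_gap p 1))"
proof (cases "d = 0")
  case True
  then have "exp_gap p d = (\<lambda>_. 0)" using assms(1) unfolding exp_gap_def by auto
  then show ?thesis using True by (simp add: has_bochner_integral_zero)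
next
  case False
  with assms(2) have "d > 0" by simp
  have "has_bochner_integral lborel (\<lambda>r. exp_gap p d (0 + d * r)) (integral\<^sup>L lborel (exp_gap p 1))"
    using exp_gap_scale[OF \<open>d > 0\<close>] integrable_exp_gap_1[OF assms(1)]
    by (simp add: has_bochner_integral_iff)
  then show ?thesis
    using lborel_has_bochner_integral_real_affine_iff[of d "exp_gap p d" _ 0] \<open>d > 0\<close>
    by (simp add: field_simps)
qed

lemma exp_neg_div_powr_tendsto_0:
  "a > 0 \<Longrightarrow> p > 0 \<Longrightarrow> ((\<lambda>r::real. exp (- (a / r powr p))) \<longlongrightarrow> 0) (at_right 0)"
  by real_asymp

lemma quadratic_form_exp_neg_tendsto:
  fixes D :: "'a \<Rightarrow> 'a \<Rightarrow> real"
  assumes "finite S" "p > 0"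
    and diag: "\<And>x. x \<in> S \<Longrightarrow> D x x = 0"
    and pos: "\<And>x y. x \<in> S \<Longrightarrow> y \<in> S \<Longrightarrow> x \<noteq> y \<Longrightarrow> 0 < D x y"
  shows "((\<lambda>r. \<Sum>x\<in>S. \<Sum>y\<in>S. c x * c y * exp (- (D x y powr p / r powr p)))
      \<longlongrightarrow> (\<Sum>x\<in>S. (c x)\<^sup>2)) (at_right 0)"
proof -
  have "((\<lambda>r. \<Sum>x\<in>S. \<Sum>y\<in>S. c x * c y * exp (- (D x y powr p / r powr p)))
      \<longlongrightarrow> (\<Sum>x\<in>S. \<Sum>y\<in>S. c x * c y * (if x = y then 1 else 0))) (at_right 0)"
  proof (intro tendsto_sum tendsto_mult_left)
    fix x y assume "x \<in> S" "y \<in> S"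
    show "((\<lambda>r. exp (- (D x y powr p / r powr p))) \<longlongrightarrow> (if x = y then 1 else 0)) (at_right 0)"
    proof (cases "x = y")
      case True
      then show ?thesis using diag \<open>x \<in> S\<close> by simp
    next
      case False
      then show ?thesis
        using exp_neg_div_powr_tendsto_0[of "D x y powr p" p] pos[OF \<open>x \<in> S\<close> \<open>y \<in> S\<close>] assms(2)
        by simp
    qed
  qed
  also have "(\<Sum>x\<in>S. \<Sum>y\<in>S. c x * c y * (if x = y then 1 else 0)) = (\<Sum>x\<in>S. (c x)\<^sup>2)"
    using assms(1) by (simp add: if_distrib power2_eq_square cong: if_cong)
  finally show ?thesis .
qed

lemma integral_zero_imp_not_eventually_pos:
  fixes f :: "real \<Rightarrow> real"
  assumes "integrable lborel f" "\<And>r. 0 \<le> f r" "integral\<^sup>L lborel f = 0"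
  shows "\<not> (\<forall>\<^sub>F r in at_right a. 0 < f r)"
proof
  assume "\<forall>\<^sub>F r in at_right a. 0 < f r"
  then obtain b where "b > a" and pos: "\<And>r. a < r \<Longrightarrow> r < b \<Longrightarrow> 0 < f r"
    unfolding eventually_at_right_field by auto
  have "AE r in lborel. f r = 0"
    using integral_nonneg_eq_0_iff_AE[OF assms(1)] assms(2,3) by simp
  then obtain Z where Z: "{r \<in> space lborel. f r \<noteq> 0} \<subseteq> Z" "Z \<in> sets lborel" "emeasure lborel Z = 0"
    by (rule AE_E)
  have "{a<..<b} \<subseteq> Z"
    using Z(1) pos by fastforce
  then have "emeasure lborel {a<..<b} \<le> emeasure lborel Z"
    using Z(2) by (intro emeasure_mono) auto
  then show False using Z(3) \<open>b > a\<close> by simp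
qed

theorem cnd_on_powr_strict:
  fixes D :: "'a \<Rightarrow> 'a \<Rightarrow> real" and c :: "'a \<Rightarrow> real"
  assumes "finite S" "p > 1" and cnd: "cnd_on S (\<lambda>x y. D x y powr p)"
    and sym: "\<And>x y. x \<in> S \<Longrightarrow> y \<in> S \<Longrightarrow> D x y = D y x"
    and diag: "\<And>x. x \<in> S \<Longrightarrow> D x x = 0"
    and pos: "\<And>x y. x \<in> S \<Longrightarrow> y \<in> S \<Longrightarrow> x \<noteq> y \<Longrightarrow> 0 < D x y"
    and "sum c S = 0" "(\<Sum>x\<in>S. \<Sum>y\<in>S. c x * c y * D x y) = 0" "x1 \<in> S"
  shows "c x1 = 0"
proof (rule ccontr)
  assume "c x1 \<noteq> 0"
  define H where "H r = (\<Sum>x\<in>S. \<Sum>y\<in>S. c x * c y * exp (- (D x y powr p / r powr p)))" for r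
  define G where "G r = (if 0 < r then H r else 0)" for r
  have D_nonneg: "0 \<le> D x y" if "x \<in> S" "y \<in> S" for x y
    using pos[OF that] diag[OF that(1)] by (cases "x = y") (auto intro: less_imp_le)
  have H_nonneg: "0 \<le> H r" if "r > 0" for r
  proof -
    have "psd_on S (\<lambda>x y. exp (- (1 / r powr p * D x y powr p)))"
      by (rule psd_on_exp_neg_cnd[OF assms(1,9) cnd]) (use diag assms(9) sym in simp_all)
    then show ?thesis unfolding H_def by (auto dest: psd_onD[where w = c])
  qed
  have "(\<Sum>x\<in>S. \<Sum>y\<in>S. c x * c y) = 0"
    using assms(7) by (simp add: sum_product[symmetric])
  then have G_eq: "G r = - (\<Sum>x\<in>S. \<Sum>y\<in>S. c x * c y * exp_gap p (D x y) r)" for r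
    by (simp add: G_def H_def exp_gap_def algebra_simps sum_subtractf)
  \<comment> \<open>integrating \<open>exp_gap\<close> over \<open>r\<close> recovers the vanishing quadratic form of \<open>D\<close>\<close>
  have "has_bochner_integral lborel (\<lambda>r. \<Sum>x\<in>S. \<Sum>y\<in>S. c x * c y * exp_gap p (D x y) r)
      (\<Sum>x\<in>S. \<Sum>y\<in>S. c x * c y * (D x y * integral\<^sup>L lborel (exp_gap p 1)))"
    by (intro has_bochner_integral_sum has_bochner_integral_mult_right
        has_bochner_integral_exp_gap assms(2) D_nonneg)
  also have "(\<Sum>x\<in>S. \<Sum>y\<in>S. c x * c y * (D x y * integral\<^sup>L lborel (exp_gap p 1))) = 0"
    using assms(8) by (simp add: sum_distrib_right[symmetric] mult.assoc[symmetric])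
  finally have "integrable lborel G" "integral\<^sup>L lborel G = 0"
    unfolding G_eq by (auto dest: has_bochner_integral_minus simp: has_bochner_integral_iff)
  moreover have "0 \<le> G r" for r
    by (simp add: G_def H_nonneg)
  ultimately have not_pos: "\<not> (\<forall>\<^sub>F r in at_right 0. 0 < G r)"
    using integral_zero_imp_not_eventually_pos by blast
  have "(H \<longlongrightarrow> (\<Sum>x\<in>S. (c x)\<^sup>2)) (at_right 0)"
    unfolding H_def using assms(1,2) diag pos by (intro quadratic_form_exp_neg_tendsto) auto
  moreover have "0 < (\<Sum>x\<in>S. (c x)\<^sup>2)"
    using \<open>c x1 \<noteq> 0\<close> by (intro sum_pos2[OF assms(1,9)]) auto
  ultimately have "\<forall>\<^sub>F r in at_right 0. 0 < H r"
    using order_tendstoD(1) by metis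
  then have "\<forall>\<^sub>F r in at_right 0. 0 < G r"
    unfolding G_def using eventually_at_right_less by (rule eventually_elim2) simp
  with not_pos show False by contradiction
qed

section \<open>Exponent one on the Hamming cube\<close>

lemma gr_exponent_pullback:
  assumes "gr_exponent Y d p" "f ` X \<subseteq> Y"
  shows "gr_exponent X (\<lambda>x y. d (f x) (f y)) p"
proof -
  have "p \<ge> 0"
    and ineq: "\<And>(m::nat) a b. \<forall>k<m. a k \<in> Y \<and> b k \<in> Y \<Longrightarrow>
      (\<Sum>l<m. \<Sum>k<l. d (a k) (a l) powr p + d (b k) (b l) powr p) \<le> (\<Sum>j<m. \<Sum>i<m. d (a j) (b i) powr p)"
    using assms(1) unfolding gr_exponent_def by auto
  then show ?thesis
    unfolding gr_exponent_def using assms(2) by (auto intro!: ineq)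
qed

lemma gr_exponent_1_sum:
  fixes d :: "'i \<Rightarrow> 'a \<Rightarrow> 'a \<Rightarrow> real"
  assumes nonneg: "\<And>i x y. i \<in> I \<Longrightarrow> 0 \<le> d i x y"
    and exponent: "\<And>i. i \<in> I \<Longrightarrow> gr_exponent X (d i) 1"
  shows "gr_exponent X (\<lambda>x y. \<Sum>i\<in>I. d i x y) 1"
  unfolding gr_exponent_def
proof (intro conjI allI impI)
  fix m :: nat and a b :: "nat \<Rightarrow> 'a"
  assume ab: "\<forall>k<m. a k \<in> X \<and> b k \<in> X"
  have "(\<Sum>l<m. \<Sum>k<l. (\<Sum>i\<in>I. d i (a k) (a l)) powr 1 + (\<Sum>i\<in>I. d i (b k) (b l)) powr 1)
      = (\<Sum>i\<in>I. \<Sum>l<m. \<Sum>k<l. d i (a k) (a l) + d i (b k) (b l))"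
    using nonneg by (simp add: sum_nonneg sum.distrib[symmetric] sum.swap[of _ I])
  also have "\<dots> \<le> (\<Sum>i\<in>I. \<Sum>j<m. \<Sum>k<m. d i (a j) (b k))"
  proof (rule sum_mono)
    fix i assume "i \<in> I"
    then show "(\<Sum>l<m. \<Sum>k<l. d i (a k) (a l) + d i (b k) (b l)) \<le> (\<Sum>j<m. \<Sum>k<m. d i (a j) (b k))"
      using exponent[of i] nonneg[of i] ab unfolding gr_exponent_def by simp
  qed
  also have "\<dots> = (\<Sum>j<m. \<Sum>k<m. (\<Sum>i\<in>I. d i (a j) (b k)) powr 1)"
    using nonneg by (simp add: sum_nonneg sum.swap[of _ I])
  finally show "(\<Sum>l<m. \<Sum>k<l. (\<Sum>i\<in>I. d i (a k) (a l)) powr 1 + (\<Sum>i\<in>I. d i (b k) (b l)) powr 1)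
      \<le> (\<Sum>j<m. \<Sum>k<m. (\<Sum>i\<in>I. d i (a j) (b k)) powr 1)" .
qed simp

lemma abs_diff_binary: "u \<in> {0, 1} \<Longrightarrow> v \<in> {0, 1} \<Longrightarrow> \<bar>u - v\<bar> = u + v - 2 * (u * v)"
  for u v :: real
  by auto

lemma gr_exponent_binary: "gr_exponent {0, 1 :: real} (\<lambda>x y. \<bar>x - y\<bar>) 1"
  unfolding gr_exponent_def
proof (intro conjI allI impI)
  fix m :: nat and f g :: "nat \<Rightarrow> real"
  assume fg: "\<forall>k<m. f k \<in> {0, 1} \<and> g k \<in> {0, 1}"
  define \<alpha> where "\<alpha> = (\<Sum>k<m. f k)"
  define \<beta> where "\<beta> = (\<Sum>k<m. g k)"
  have "2 * (\<Sum>l<m. \<Sum>k<l. \<bar>f k - f l\<bar> + \<bar>g k - g l\<bar>) = (\<Sum>l<m. \<Sum>k<m. \<bar>f k - f l\<bar> + \<bar>g k - g l\<bar>)"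
    by (rule sum_lower_triangle_symmetric) (simp_all add: abs_minus_commute)
  also have "\<dots> = (\<Sum>l<m. \<Sum>k<m. (f k + f l - 2 * (f k * f l)) + (g k + g l - 2 * (g k * g l)))"
    using fg by (intro sum.cong refl) (simp add: abs_diff_binary)
  also have "\<dots> = 2 * real m * (\<alpha> + \<beta>) - 2 * \<alpha>\<^sup>2 - 2 * \<beta>\<^sup>2"
    unfolding \<alpha>_def \<beta>_def
    by (simp add: sum.distrib sum_subtractf sum_distrib_left[symmetric] sum_distrib_right[symmetric]
        power2_eq_square algebra_simps)
  finally have lhs: "(\<Sum>l<m. \<Sum>k<l. \<bar>f k - f l\<bar> + \<bar>g k - g l\<bar>) = real m * (\<alpha> + \<beta>) - \<alpha>\<^sup>2 - \<beta>\<^sup>2"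
    by simp
  have "(\<Sum>j<m. \<Sum>i<m. \<bar>f j - g i\<bar>) = (\<Sum>j<m. \<Sum>i<m. f j + g i - 2 * (f j * g i))"
    using fg by (intro sum.cong refl) (simp add: abs_diff_binary)
  also have "\<dots> = real m * (\<alpha> + \<beta>) - 2 * \<alpha> * \<beta>"
    unfolding \<alpha>_def \<beta>_def
    by (simp add: sum.distrib sum_subtractf sum_distrib_left[symmetric] sum_distrib_right[symmetric]
        algebra_simps)
  finally have rhs: "(\<Sum>j<m. \<Sum>i<m. \<bar>f j - g i\<bar>) = real m * (\<alpha> + \<beta>) - 2 * \<alpha> * \<beta>" .
  have "0 \<le> (\<alpha> - \<beta>)\<^sup>2" by simp
  then show "(\<Sum>l<m. \<Sum>k<l. \<bar>f k - f l\<bar> powr 1 + \<bar>g k - g l\<bar> powr 1) \<le> (\<Sum>j<m. \<Sum>i<m. \<bar>f j - g i\<bar> powr 1)"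
    using lhs rhs by (simp add: power2_eq_square algebra_simps)
qed simp

abbreviation binary_cube :: "(real ^ 'n) set" where
  "binary_cube \<equiv> {x. \<forall>i. x $ i \<in> {0, 1}}"

lemma l1_dist_commute: "l1_dist x y = l1_dist y x"
  unfolding l1_dist_def by (simp add: abs_minus_commute)

lemma l1_dist_self: "l1_dist x x = 0"
  unfolding l1_dist_def by simp

lemma l1_dist_pos: "x \<noteq> y \<Longrightarrow> 0 < l1_dist x y"
proof -
  assume "x \<noteq> y"
  then obtain i where "x $ i \<noteq> y $ i" by (auto simp: vec_eq_iff)
  then show ?thesis
    unfolding l1_dist_def by (intro sum_pos2[where i = i]) auto
qed

lemma gr_exponent_l1_dist_binary_cube: "gr_exponent binary_cube l1_dist 1"
proof -
  have "gr_exponent binary_cube (\<lambda>x y. \<Sum>i\<in>UNIV. \<bar>x $ i - y $ i\<bar>) 1"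
    by (intro gr_exponent_1_sum gr_exponent_pullback[OF gr_exponent_binary]) auto
  then show ?thesis
    unfolding l1_dist_def[abs_def] .
qed

lemma l1_dist_binary_cube:
  "x \<in> binary_cube \<Longrightarrow> y \<in> binary_cube \<Longrightarrow> l1_dist x y = (\<Sum>i\<in>UNIV. x $ i + y $ i - 2 * (x $ i * y $ i))"
  unfolding l1_dist_def by (intro sum.cong refl abs_diff_binary) auto

lemma l1_dist_quadratic_form_affine_dependence:
  fixes S :: "(real ^ 'n) set" and c :: "real ^ 'n \<Rightarrow> real"
  assumes "S \<subseteq> binary_cube" "sum c S = 0" "(\<Sum>v\<in>S. c v *\<^sub>R v) = 0"
  shows "(\<Sum>x\<in>S. \<Sum>y\<in>S. c x * c y * l1_dist x y) = 0"
proof -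
  have coordinate: "(\<Sum>x\<in>S. c x * x $ i) = 0" for i
    using arg_cong[OF assms(3), of "\<lambda>v. v $ i"] by simp
  have "(\<Sum>x\<in>S. \<Sum>y\<in>S. c x * c y * l1_dist x y)
      = (\<Sum>x\<in>S. \<Sum>y\<in>S. \<Sum>i\<in>UNIV. c x * c y * (x $ i + y $ i - 2 * (x $ i * y $ i)))"
    using assms(1) by (intro sum.cong refl) (simp add: l1_dist_binary_cube subset_iff sum_distrib_left)
  also have "\<dots> = (\<Sum>i\<in>UNIV. \<Sum>x\<in>S. \<Sum>y\<in>S. (c x * x $ i) * c y + c x * (c y * y $ i) - 2 * ((c x * x $ i) * (c y * y $ i)))"
    by (simp add: sum.swap[of _ UNIV] algebra_simps)
  also have "\<dots> = (\<Sum>i\<in>UNIV. (\<Sum>x\<in>S. c x * x $ i) * sum c S + sum c S * (\<Sum>y\<in>S. c y * y $ i)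
        - 2 * ((\<Sum>x\<in>S. c x * x $ i) * (\<Sum>y\<in>S. c y * y $ i)))"
    by (simp only: sum_subtractf sum.distrib sum_distrib_left[symmetric] sum_distrib_right[symmetric])
  also have "\<dots> = 0"
    using coordinate assms(2) by simp
  finally show ?thesis .
qed

lemma gr_exponent_binary_cube_le_1:
  fixes S :: "(real ^ 'n) set"
  assumes "S \<subseteq> binary_cube" "card S > CARD('n) + 1" "gr_exponent S l1_dist p"
  shows "p \<le> 1"
proof (rule ccontr)
  assume "\<not> p \<le> 1"
  then have "p > 1" by simp
  have "finite S"
    using assms(2) card.infinite by fastforce
  then have "affine_dependent S"
    using affine_dependent_biggerset[OF \<open>finite S\<close>] assms(2) by simp
  then obtain c x1 where c: "sum c S = 0" "(\<Sum>v\<in>S. c v *\<^sub>R v) = 0" "x1 \<in> S" "c x1 \<noteq> 0"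
    unfolding affine_dependent_explicit_finite[OF \<open>finite S\<close>] by blast
  have cnd: "cnd_on S (\<lambda>x y. l1_dist x y powr p)"
    by (rule gr_exponent_imp_cnd_on[OF \<open>finite S\<close> assms(3) l1_dist_commute l1_dist_self])
  have quadratic_form: "(\<Sum>x\<in>S. \<Sum>y\<in>S. c x * c y * l1_dist x y) = 0"
    by (rule l1_dist_quadratic_form_affine_dependence[OF assms(1) c(1,2)])
  have "c x1 = 0"
    by (rule cnd_on_powr_strict[OF \<open>finite S\<close> \<open>p > 1\<close> cnd l1_dist_commute l1_dist_self
          l1_dist_pos c(1) quadratic_form c(3)])
  with c(4) show False ..
qed

theorem corollary4p4:
  fixes S :: "(real ^ 'n) set"
  assumes "S \<subseteq> {x. \<forall>i. x $ i \<in> {0, 1}}"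
    and "card S > CARD('n) + 1"
  shows "gen_roundness S l1_dist = 1"
proof -
  have "gr_exponent S l1_dist 1"
    by (rule gr_exponent_pullback[OF gr_exponent_l1_dist_binary_cube]) (use assms(1) in auto)
  moreover have "p \<le> 1" if "gr_exponent S l1_dist p" for p
    using gr_exponent_binary_cube_le_1[OF assms that] .
  ultimately show ?thesis
    unfolding gen_roundness_def by (intro Sup_eqI) (auto simp: one_ereal_def)
qed

end
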